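(* Let $\boldsymbol\psi\in\mathbb R^n$ with all entries positive and let $\boldsymbol\Sigma$ be a real symmetric positive definite $n\times n$ matrix whose diagonal entries all equal a common constant $\bar\lambda>1$. Let $\lambda_1\ge\dots\ge\lambda_n>0$ be the eigenvalues of $\boldsymbol\Sigma$ with orthonormal eigenvectors $\mathbf u_1,\dots,\mathbf u_n$, and let $k\in\{0,\dots,n\}$ be such that $\lambda_i>\bar\lambda$ for $i\le k$ and $\lambda_i\le\bar\lambda$ for $i>k$. Define $\Omega(\mathbf q)=\boldsymbol\psi^\top\mathbf q-\tfrac12\mathbf q^\top\boldsymbol\Sigma\mathbf q$, $\mathbf q^\ddagger=\tfrac12\boldsymbol\Sigma^{-1}\boldsymbol\psi$, $\mathbf q^*=(\boldsymbol\Sigma+\bar\lambda\mathbf I)^{-1}\boldsymbol\psi$, and $$w_i=\frac{(\lambda_i+3\bar\lambda)(\lambda_i-\bar\lambda)}{\lambda_i(\lambda_i+\bar\lambda)^2}.$$ Then $\Omega(\mathbf q^* )>\Omega(\mathbf q^\ddagger)$ if and only if $$\sum_{i=1}^k|w_i|(\boldsymbol\psi^\top\mathbf u_i)^2>\sum_{i=k+1}^n|w_i|(\boldsymbol\psi^\top\mathbf u_i)^2 .$$ In particular, if $k\ge 1$ and $\boldsymbol\psi\in\operatorname{span}\{\mathbf u_1,\dots,\mathbf u_k\}$, then $\Omega(\mathbf q^* )>\Omega(\mathbf q^\ddagger)$.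
   Context: Interpretation (not needed for the statement): $\mathbf q^\ddagger$ maximizes aggregate profit $\sum_i(\psi_i-\sum_j\sigma_{ij}q_j)q_i$ (monopoly), and $\mathbf q^*$ is the Cournot equilibrium output profile when firm $i$'s profit is $(\psi_i-\sum_j\sigma_{ij}q_j)q_i$. *)

theory Defs
  imports "HOL-Analysis.Analysis"
begin

definition Omega :: "real^'n \<Rightarrow> real^'n^'n \<Rightarrow> real^'n \<Rightarrow> real" where
  "Omega psi S q = psi \<bullet> q - (1/2) * (q \<bullet> (S *v q))"

definition q_monopoly :: "real^'n \<Rightarrow> real^'n^'n \<Rightarrow> real^'n" where
  "q_monopoly psi S = (1/2) *\<^sub>R (matrix_inv S *v psi)"

definition q_cournot :: "real^'n \<Rightarrow> real^'n^'n \<Rightarrow> real \<Rightarrow> real^'n" where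
  "q_cournot psi S lbar = matrix_inv (S + lbar *\<^sub>R mat 1) *v psi"

definition wgt :: "real \<Rightarrow> real \<Rightarrow> real" where
  "wgt lbar l = ((l + 3 * lbar) * (l - lbar)) / (l * (l + lbar)^2)"

end

theory Submission
  imports Defs
begin

(* In an orthonormal eigenbasis u_i of Sigma both profiles are diagonal: writing c_i = psi . u_i,
   q_star has coordinates c_i / (lambda_i + lbar) and q_dd has coordinates c_i / (2 lambda_i).
   Omega decouples as the sum of c_i a_i - lambda_i a_i^2 / 2 over the coordinates a_i, so
   Omega(q_star) - Omega(q_dd) is the sum of w_i c_i^2 / 8, and w_i has the sign of lambda_i - lbar.
   If psi lies in the span of u_1, ..., u_k, only the positive terms survive, and psi <> 0
   makes one of them nonzero. *)

lemma inner_sum_orthonormal: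
  fixes u :: "'i \<Rightarrow> 'a::real_inner"
  assumes "finite I" and "\<forall>i\<in>I. \<forall>j\<in>I. u i \<bullet> u j = (if i = j then 1 else 0)"
  shows "(\<Sum>i\<in>I. a i *\<^sub>R u i) \<bullet> (\<Sum>j\<in>I. b j *\<^sub>R u j) = (\<Sum>i\<in>I. a i * b i)"
proof -
  have "(\<Sum>i\<in>I. a i * (u i \<bullet> u j)) = a j" if "j \<in> I" for j
    using assms that by (simp add: if_distrib[of "(*) _"] sum.delta cong: sum.cong if_cong)
  then show ?thesis
    by (simp add: inner_sum_left inner_sum_right mult.commute cong: sum.cong)
qed

locale orthonormal_basis_family =
  fixes u :: "'i \<Rightarrow> 'a::euclidean_space" and I :: "'i set"
  assumes finite_index: "finite I"
    and orthonormal: "\<forall>i\<in>I. \<forall>j\<in>I. u i \<bullet> u j = (if i = j then 1 else 0)"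
    and span_eq_UNIV: "span (u ` I) = UNIV"
begin

lemma inj_on_index: "inj_on u I"
  by (rule inj_onI) (metis orthonormal zero_neq_one)

lemma expansion: "x = (\<Sum>i\<in>I. (x \<bullet> u i) *\<^sub>R u i)"
proof -
  have "pairwise orthogonal (u ` I)"
    using orthonormal by (auto simp: pairwise_def orthogonal_def)
  moreover have "\<And>v. v \<in> u ` I \<Longrightarrow> norm v = 1"
    using orthonormal by (auto simp: norm_eq_sqrt_inner)
  ultimately have "(\<Sum>v\<in>u ` I. (x \<bullet> v) *\<^sub>R v) = x"
    using orthonormal_basis_expand span_eq_UNIV finite_index by blast
  then show ?thesis
    by (simp add: sum.reindex[OF inj_on_index])
qed

lemma inner_sum: "x \<bullet> (\<Sum>i\<in>I. a i *\<^sub>R u i) = (\<Sum>i\<in>I. (x \<bullet> u i) * a i)"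
  by (subst expansion[of x]) (rule inner_sum_orthonormal[OF finite_index orthonormal])

lemma eq_0_iff_inner_basis_eq_0: "x = 0 \<longleftrightarrow> (\<forall>i\<in>I. x \<bullet> u i = 0)"
  by (metis (no_types, lifting) expansion inner_zero_left scaleR_eq_0_iff sum.neutral)

lemma inner_basis_eq_0_if_in_span:
  assumes "x \<in> span (u ` J)" and "J \<subseteq> I" and "i \<in> I - J"
  shows "x \<bullet> u i = 0"
proof -
  have "orthogonal (u i) x"
    by (rule orthogonal_to_span[OF assms(1)])
      (use assms(2,3) orthonormal in \<open>auto simp: orthogonal_def\<close>)
  then show ?thesis
    by (simp add: orthogonal_def inner_commute)
qed

lemma sum_inner_basis_pos_if_in_span:
  assumes "x \<in> span (u ` J)" and "J \<subseteq> I" and "x \<noteq> 0" and "\<forall>i\<in>J. 0 < w i"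
  shows "0 < (\<Sum>i\<in>J. w i * (x \<bullet> u i)\<^sup>2)"
proof -
  obtain i where "i \<in> I" and "x \<bullet> u i \<noteq> 0"
    using assms(3) eq_0_iff_inner_basis_eq_0 by blast
  moreover from this have "i \<in> J"
    using inner_basis_eq_0_if_in_span[OF assms(1,2)] by blast
  ultimately show ?thesis
    using assms(2,4) finite_subset[OF assms(2) finite_index] by (intro sum_pos2[of _ i]) auto
qed

end

lemma orthonormal_basis_familyI:
  fixes u :: "'i \<Rightarrow> 'a::euclidean_space"
  assumes fin: "finite I" and orth: "\<forall>i\<in>I. \<forall>j\<in>I. u i \<bullet> u j = (if i = j then 1 else 0)"
    and card: "card I = DIM('a)"
  shows "orthonormal_basis_family u I"
proof
  have inj: "inj_on u I"
    by (rule inj_onI) (metis orth zero_neq_one)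
  have "independent (u ` I)"
    by (rule pairwise_orthogonal_independent)
      (use orth in \<open>fastforce simp: pairwise_def orthogonal_def\<close>)+
  moreover have "card (u ` I) = dim (UNIV :: 'a set)"
    using card card_image[OF inj] by simp
  ultimately show "span (u ` I) = UNIV"
    using eucl.card_eq_dim[of "u ` I" UNIV] fin by auto
qed (use fin orth in auto)

lemma matrix_inv_mult_left:
  fixes A :: "'a::semiring_1^'n^'n"
  assumes "invertible A"
  shows "matrix_inv A ** A = mat 1"
  using someI_ex[OF assms[unfolded invertible_def]] by (simp add: matrix_inv_def)

locale eigenbasis = orthonormal_basis_family u I for u :: "'i \<Rightarrow> real^'n" and I +
  fixes M :: "real^'n^'n" and m :: "'i \<Rightarrow> real"
  assumes eigenvector: "\<forall>i\<in>I. M *v u i = m i *\<^sub>R u i"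
begin

lemma matrix_vector_mult_sum:
  "M *v (\<Sum>i\<in>I. a i *\<^sub>R u i) = (\<Sum>i\<in>I. (m i * a i) *\<^sub>R u i)"
  by (simp add: linear_sum[OF matrix_vector_mul_linear] matrix_vector_mult_scaleR
      eigenvector mult.commute)

lemma matrix_inv_mult_vector:
  assumes "\<forall>i\<in>I. m i \<noteq> 0"
  shows "matrix_inv M *v x = (\<Sum>i\<in>I. ((x \<bullet> u i) / m i) *\<^sub>R u i)"
proof -
  define f where "f y = (\<Sum>i\<in>I. ((y \<bullet> u i) / m i) *\<^sub>R u i)" for y
  have right_inverse: "M *v f y = y" for y
    unfolding f_def matrix_vector_mult_sum using assms
    by (subst (2) expansion[of y]) (auto intro: sum.cong)
  then have "surj ((*v) M)"
    by (metis surjI)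
  then have "invertible M"
    by (metis invertible_def matrix_left_right_inverse matrix_right_invertible_surjective)
  then have "matrix_inv M *v x = f x"
    by (metis right_inverse matrix_inv_mult_left matrix_vector_mul_assoc matrix_vector_mul_lid)
  then show ?thesis
    unfolding f_def .
qed

lemma Omega_sum:
  "Omega psi M (\<Sum>i\<in>I. a i *\<^sub>R u i) = (\<Sum>i\<in>I. (psi \<bullet> u i) * a i - 1/2 * m i * (a i)\<^sup>2)"
proof -
  have "(\<Sum>i\<in>I. a i *\<^sub>R u i) \<bullet> (M *v (\<Sum>i\<in>I. a i *\<^sub>R u i)) = (\<Sum>i\<in>I. a i * (m i * a i))"
    unfolding matrix_vector_mult_sum by (rule inner_sum_orthonormal[OF finite_index orthonormal])
  then show ?thesis
    unfolding Omega_def inner_sum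
    by (simp add: sum_subtractf sum_distrib_left power2_eq_square algebra_simps)
qed

lemma eigenbasis_shift: "eigenbasis u I (M + c *\<^sub>R mat 1) (\<lambda>i. m i + c)"
  by unfold_locales
    (simp add: eigenvector matrix_vector_mult_add_rdistrib algebra_simps
      flip: scaleR_matrix_vector_assoc)

end

lemma wgt_pos:
  assumes "0 < lbar" and "lbar < l"
  shows "0 < wgt lbar l"
  using assms unfolding wgt_def by (intro divide_pos_pos mult_pos_pos) auto

lemma wgt_nonpos:
  assumes "0 < lbar" and "0 < l" and "l \<le> lbar"
  shows "wgt lbar l \<le> 0"
  using assms unfolding wgt_def by (intro divide_nonpos_pos mult_nonneg_nonpos) auto

lemma cournot_minus_monopoly_scalar:
  fixes l lbar c :: real
  assumes "l \<noteq> 0" and "l + lbar \<noteq> 0"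
  shows "(c * (c / (l + lbar)) - 1/2 * l * (c / (l + lbar))\<^sup>2)
           - (c * (c / (2 * l)) - 1/2 * l * (c / (2 * l))\<^sup>2)
         = wgt lbar l * c\<^sup>2 / 8"
  using assms unfolding wgt_def
  by (simp add: divide_simps) (simp add: algebra_simps power2_eq_square power3_eq_cube)

lemma (in eigenbasis) Omega_cournot_minus_Omega_monopoly:
  assumes m_pos: "\<forall>i\<in>I. 0 < m i" and "0 < lbar"
  shows "Omega psi M (q_cournot psi M lbar) - Omega psi M (q_monopoly psi M)
         = (\<Sum>i\<in>I. wgt lbar (m i) * (psi \<bullet> u i)\<^sup>2 / 8)"
proof -
  interpret shifted: eigenbasis u I "M + lbar *\<^sub>R mat 1" "\<lambda>i. m i + lbar"
    by (rule eigenbasis_shift)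
  have cournot: "q_cournot psi M lbar = (\<Sum>i\<in>I. ((psi \<bullet> u i) / (m i + lbar)) *\<^sub>R u i)"
    unfolding q_cournot_def
    by (rule shifted.matrix_inv_mult_vector) (use assms in \<open>auto simp: add_pos_pos\<close>)
  have "\<forall>i\<in>I. m i \<noteq> 0"
    using m_pos by auto
  then have monopoly: "q_monopoly psi M = (\<Sum>i\<in>I. ((psi \<bullet> u i) / (2 * m i)) *\<^sub>R u i)"
    unfolding q_monopoly_def by (simp add: matrix_inv_mult_vector scaleR_sum_right)
  show ?thesis
    unfolding cournot monopoly Omega_sum sum_subtractf[symmetric]
    by (intro sum.cong refl cournot_minus_monopoly_scalar) (use assms in \<open>auto simp: add_pos_pos\<close>)
qed

lemma sum_union_eq_sum_abs_diff:
  fixes f :: "'a \<Rightarrow> 'b::ordered_ab_group_add_abs"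
  assumes "finite A" and "finite B" and "A \<inter> B = {}"
    and "\<forall>x\<in>A. 0 \<le> f x" and "\<forall>x\<in>B. f x \<le> 0"
  shows "sum f (A \<union> B) = (\<Sum>x\<in>A. \<bar>f x\<bar>) - (\<Sum>x\<in>B. \<bar>f x\<bar>)"
  using assms by (simp add: sum.union_disjoint sum_negf[symmetric] cong: sum.cong)

theorem theorem5:
  fixes psi :: "real^'n" and S :: "real^'n^'n" and lbar :: real
    and lam :: "nat \<Rightarrow> real" and u :: "nat \<Rightarrow> real^'n" and k :: nat
  assumes psi_pos: "\<forall>j. psi $ j > 0"
    and sym: "transpose S = S"
    and posdef: "\<forall>x. x \<noteq> 0 \<longrightarrow> x \<bullet> (S *v x) > 0"
    and diag: "\<forall>j. S $ j $ j = lbar"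
    and lbar_gt: "lbar > 1"
    and eig: "\<forall>i\<in>{1..CARD('n)}. S *v u i = lam i *\<^sub>R u i"
    and orthonormal: "\<forall>i\<in>{1..CARD('n)}. \<forall>j\<in>{1..CARD('n)}.
                        u i \<bullet> u j = (if i = j then 1 else 0)"
    and sorted: "\<forall>i\<in>{1..CARD('n)}. \<forall>j\<in>{1..CARD('n)}. i \<le> j \<longrightarrow> lam j \<le> lam i"
    and lam_pos: "\<forall>i\<in>{1..CARD('n)}. lam i > 0"
    and k_le: "k \<le> CARD('n)"
    and above: "\<forall>i\<in>{1..k}. lam i > lbar"
    and below: "\<forall>i\<in>{k+1..CARD('n)}. lam i \<le> lbar"
  shows "(Omega psi S (q_cournot psi S lbar) > Omega psi S (q_monopoly psi S)
           \<longleftrightarrow> (\<Sum>i=1..k. \<bar>wgt lbar (lam i)\<bar> * (psi \<bullet> u i)^2)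
               > (\<Sum>i=k+1..CARD('n). \<bar>wgt lbar (lam i)\<bar> * (psi \<bullet> u i)^2))
       \<and> ((k \<ge> 1 \<and> psi \<in> span (u ` {1..k}))
           \<longrightarrow> Omega psi S (q_cournot psi S lbar) > Omega psi S (q_monopoly psi S))"
proof -
  interpret eigenbasis u "{1..CARD('n)}" S lam
    by (intro eigenbasis.intro orthonormal_basis_familyI eigenbasis_axioms.intro)
      (use orthonormal eig in auto)
  define A where "A = (\<Sum>i=1..k. \<bar>wgt lbar (lam i)\<bar> * (psi \<bullet> u i)^2)"
  define B where "B = (\<Sum>i=k+1..CARD('n). \<bar>wgt lbar (lam i)\<bar> * (psi \<bullet> u i)^2)"
  have psi_nonzero: "psi \<noteq> 0"
    using psi_pos by (metis less_irrefl zero_index)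
  have lbar_pos: "0 < lbar"
    using lbar_gt by simp
  have index_split: "{1..CARD('n)} = {1..k} \<union> {k+1..CARD('n)}"
    using k_le by auto
  have wgt_above: "\<forall>i\<in>{1..k}. 0 < wgt lbar (lam i)"
    using lbar_pos above by (auto intro: wgt_pos)
  have wgt_below: "\<forall>i\<in>{k+1..CARD('n)}. wgt lbar (lam i) \<le> 0"
    using lbar_pos below lam_pos by (auto intro: wgt_nonpos)
  have gain: "Omega psi S (q_cournot psi S lbar) - Omega psi S (q_monopoly psi S) = (A - B) / 8"
    unfolding Omega_cournot_minus_Omega_monopoly[OF lam_pos lbar_pos] index_split A_def B_def
      sum_divide_distrib[symmetric]
    by (subst sum_union_eq_sum_abs_diff)
      (use wgt_above wgt_below in \<open>auto simp: abs_mult intro: mult_nonpos_nonneg\<close>)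
  have "B < A" if psi_span: "psi \<in> span (u ` {1..k})"
  proof -
    have "B = 0"
      unfolding B_def using inner_basis_eq_0_if_in_span[OF psi_span] by auto
    moreover have "0 < A"
      unfolding A_def using psi_span psi_nonzero wgt_above k_le
      by (intro sum_inner_basis_pos_if_in_span) auto
    ultimately show ?thesis
      by simp
  qed
  then show ?thesis
    using gain unfolding A_def[symmetric] B_def[symmetric] by auto
qed

end
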